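(* Let $\mathcal{H}=\operatorname{coh}\mathbb{X}$ for a weighted projective line of weight type $(p_1,\ldots,p_t)$ and $\mathcal{C}=\mathcal{C}(\mathcal{H})$. Let $\langle\Phi\rangle$ act on $K_0(\mathcal{H})$ by $\Phi.y=-\Phi y$. (i) If at least one weight $p_i$ is even, then $y\mapsto\langle y,-\rangle$ induces an isomorphism $K_0(\mathcal{H})^{\langle\Phi\rangle}\xrightarrow{\sim}\overline{K}_0(\mathcal{C})^*=\operatorname{Hom}_{\mathbb{Z}}(\overline{K}_0(\mathcal{C}),\mathbb{Z})$, giving an exact sequence $0\to\overline{K}_0(\mathcal{C})^*\to K_0(\mathcal{H})\xrightarrow{1+\Phi}K_0(\mathcal{H})\to\overline{K}_0(\mathcal{C})\to0$. (ii) If all weights are odd, then with $K_0(\mathcal{H})_2=K_0(\mathcal{H})\otimes_{\mathbb{Z}}\mathbb{Z}_2$ (with induced $\Phi$-action), $y\mapsto\langle y,-\rangle_2$ induces an isomorphism $(K_0(\mathcal{H})_2)^{\langle\Phi\rangle}\xrightarrow{\sim}\overline{K}_0(\mathcal{C})^*=\operatorname{Hom}_{\mathbb{Z}}(\overline{K}_0(\mathcal{C}),\mathbb{Z}_2)$, giving an exact sequence $0\to\overline{K}_0(\mathcal{C})^*\to K_0(\mathcal{H})_2\xrightarrow{1+\Phi}K_0(\mathcal{H})_2\to\overline{K}_0(\mathcal{C})\to0$.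
   Context: $k$ algebraically closed; $\mathcal{H}=\operatorname{coh}\mathbb{X}$ hereditary abelian with Serre duality and AR translation $\tau$. Euler form $\langle[X],[Y]\rangle=\dim\operatorname{Hom}(X,Y)-\dim\operatorname{Ext}^1(X,Y)$ on $K_0(\mathcal{H})$, and $\langle-,-\rangle_2$ the induced $\mathbb{Z}_2$-valued form on $K_0(\mathcal{H})_2$. Coxeter transformation $\Phi[X]=[\tau X]$. With $\mathcal{D}=D^b(\mathcal{H})$, suspension $\Sigma$, $F=\tau^{-1}\Sigma$, the cluster category $\mathcal{C}=\mathcal{D}/F^{\mathbb{Z}}$ has objects of $\mathcal{D}$, $\operatorname{Hom}_{\mathcal{C}}(X,Y)=\bigoplus_i\operatorname{Hom}_{\mathcal{D}}(X,F^iY)$, projection $\pi$. $\overline{K}_0(\mathcal{C})$ is the Grothendieck group with respect to induced triangles (images under $\pi$ of exact triangles of $\mathcal{D}$, up to isomorphism); it is a quotient of $K_0(\mathcal{H})=K_0(\mathcal{D})$ via $[X]\mapsto[\pi X]$, namely $\operatorname{Coker}(1+\Phi)$, and it is free over $\mathbb{Z}$ in case (i) and over $\mathbb{Z}_2$ in case (ii). A linear form on $K_0(\mathcal{H})$ (resp. $K_0(\mathcal{H})_2$) vanishing on $\operatorname{Im}(1+\Phi)$ is identified with a linear form on $\overline{K}_0(\mathcal{C})$. *)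

theory Defs
  imports Main "HOL-Library.Z2" "HOL-Library.FuncSet"
begin

text \<open>Combinatorial model of K_0(coh X) for a weighted projective line of weight
type ps = [p_1,...,p_t]: the Z-basis is given by the classes of the summands of the
canonical tilting bundle T = direct sum of O(x), 0 <= x <= c, namely
O (vertex V0), O(j x_i) for 1 <= j < p_i (vertex Vij i j, i indexed from 0),
and O(c) (vertex Vc).\<close>

datatype vert = V0 | Vc | Vij nat nat

definition verts :: "nat list \<Rightarrow> vert set" where
  "verts ps = {V0, Vc} \<union> {Vij i j | i j. i < length ps \<and> 1 \<le> j \<and> j < ps ! i}"

text \<open>dim Hom(T_a, T_b) for summands of the tilting bundle (Ext^1 between them vanishes),
i.e. dimension of the graded piece S_(y-x) of the coordinate algebra.\<close>
fun homdim :: "vert \<Rightarrow> vert \<Rightarrow> nat" where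
  "homdim V0 V0 = 1"
| "homdim Vc Vc = 1"
| "homdim V0 Vc = 2"
| "homdim V0 (Vij i j) = 1"
| "homdim (Vij i j) Vc = 1"
| "homdim (Vij i j) (Vij i' j') = (if i = i' \<and> j \<le> j' then 1 else 0)"
| "homdim _ _ = 0"

text \<open>K_0(H) (coefficients 'a = int), resp. K_0(H)_2 = K_0(H) tensor Z_2 (coefficients
'a = bit): finitely supported coefficient vectors on the basis.\<close>
definition K0 :: "nat list \<Rightarrow> (vert \<Rightarrow> 'a::zero) set" where
  "K0 ps = {x. \<forall>v. v \<notin> verts ps \<longrightarrow> x v = 0}"

definition euler :: "nat list \<Rightarrow> (vert \<Rightarrow> 'a::comm_ring_1) \<Rightarrow> (vert \<Rightarrow> 'a) \<Rightarrow> 'a" where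
  "euler ps x y = (\<Sum>a\<in>verts ps. \<Sum>b\<in>verts ps. x a * of_nat (homdim a b) * y b)"

definition red :: "(vert \<Rightarrow> int) \<Rightarrow> (vert \<Rightarrow> bit)" where
  "red x = (\<lambda>v. of_int (x v))"

text \<open>Dual of Kbar_0(C) = Coker(1+Phi): Z-linear (= additive) forms on K_0 (resp. K_0 tensor Z_2),
with values in 'a, vanishing on Im(1+Phi).\<close>
definition lforms :: "nat list \<Rightarrow> ((vert \<Rightarrow> 'a) \<Rightarrow> (vert \<Rightarrow> 'a)) \<Rightarrow> ((vert \<Rightarrow> 'a::comm_ring_1) \<Rightarrow> 'a) set" where
  "lforms ps F = {f \<in> extensional (K0 ps).
      (\<forall>x\<in>K0 ps. \<forall>x'\<in>K0 ps. f (\<lambda>v. x v + x' v) = f x + f x') \<and>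
      (\<forall>x\<in>K0 ps. f (\<lambda>v. x v + F x v) = 0)}"

end

theory Submission
  imports Defs
begin

(* The Euler form is computed on the canonical tilting bundle T, whose summands can be
   ordered so that nonzero morphisms only go upwards: the Gram matrix (dim Hom(T_a, T_b))
   is unitriangular, hence invertible over every coefficient ring. So every additive form
   on K_0(H), over Z or over Z_2 (where additive forms are linear), is <y,-> for a unique y.
   Serre duality <y, Phi x> = -<x, y>, applied in both arguments, gives
   <y, x + Phi x> = -<x, Phi y + y>, so by nondegeneracy <y,-> vanishes on Im(1 + Phi)
   exactly when Phi y = -y.
   The parity of the weights only decides whether Kbar_0(C) is free over Z or over Z_2;
   the duality holds over both coefficient rings for every weight type. *)

definition unitriangular :: "'v set \<Rightarrow> ('v \<Rightarrow> nat) \<Rightarrow> ('v \<Rightarrow> 'v \<Rightarrow> 'a::{zero,one}) \<Rightarrow> bool" where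
  "unitriangular S r M \<longleftrightarrow>
     (\<forall>a\<in>S. M a a = 1) \<and> (\<forall>a\<in>S. \<forall>b\<in>S. a \<noteq> b \<and> M a b \<noteq> 0 \<longrightarrow> r a < r b)"

lemma unitriangular_subset: "unitriangular S r M \<Longrightarrow> T \<subseteq> S \<Longrightarrow> unitriangular T r M"
  unfolding unitriangular_def by blast

lemma unitriangular_transpose:
  assumes "finite S" "unitriangular S r M"
  shows "unitriangular S (\<lambda>a. Max (r ` S) - r a) (\<lambda>a b. M b a)"
  unfolding unitriangular_def
proof (intro conjI ballI impI)
  fix a b assume "a \<in> S" "b \<in> S" "a \<noteq> b \<and> M b a \<noteq> 0"
  with assms have "r b < r a" "r a \<le> Max (r ` S)"
    by (auto simp: unitriangular_def)
  then show "Max (r ` S) - r a < Max (r ` S) - r b" by linarith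
qed (use assms in \<open>auto simp: unitriangular_def\<close>)

lemma unitriangular_ex_unit_row:
  assumes "finite S" "S \<noteq> {}" "unitriangular S r M"
  obtains m where "m \<in> S" "\<And>b. b \<in> S \<Longrightarrow> M m b = (if b = m then 1 else 0)"
proof -
  have "Max (r ` S) \<in> r ` S" using assms(1,2) by simp
  then obtain m where m: "m \<in> S" "r m = Max (r ` S)" by (auto simp del: Max_in)
  have "M m b = (if b = m then 1 else 0)" if b: "b \<in> S" for b
  proof (cases "b = m")
    case True
    then show ?thesis using assms(3) b by (simp add: unitriangular_def)
  next
    case False
    have "r b \<le> Max (r ` S)" using assms(1) b by simp
    then have "\<not> r m < r b" using m(2) by simp
    then show ?thesis using assms(3) m(1) b False by (auto simp: unitriangular_def)
  qed
  with m that show ?thesis by blast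
qed

lemma unitriangular_left_kernel_zero:
  fixes M :: "'v \<Rightarrow> 'v \<Rightarrow> 'a::comm_ring_1"
  assumes "finite S" "unitriangular S r M" "\<forall>b\<in>S. (\<Sum>a\<in>S. y a * M a b) = 0"
  shows "\<forall>a\<in>S. y a = 0"
  using assms
proof (induction S rule: finite_remove_induct)
  case (remove S)
  obtain m where m: "m \<in> S" "\<And>b. b \<in> S \<Longrightarrow> M m b = (if b = m then 1 else 0)"
    using unitriangular_ex_unit_row remove.hyps(1,2) remove.prems(1) by blast
  have sum_eq: "(\<Sum>a\<in>S. y a * M a b) = (if b = m then y m else 0) + (\<Sum>a\<in>S - {m}. y a * M a b)"
    if "b \<in> S" for b
    using remove.hyps(1) m that by (simp add: sum.remove)
  have "\<forall>b\<in>S - {m}. (\<Sum>a\<in>S - {m}. y a * M a b) = 0"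
  proof
    fix b assume "b \<in> S - {m}"
    then show "(\<Sum>a\<in>S - {m}. y a * M a b) = 0"
      using remove.prems(2) sum_eq[of b] by simp
  qed
  then have "\<forall>a\<in>S - {m}. y a = 0"
    using remove.IH[OF m(1)] unitriangular_subset[OF remove.prems(1)] by blast
  moreover have "y m = 0"
    using sum_eq[OF m(1)] remove.prems(2) m(1) calculation by simp
  ultimately show ?case by blast
qed simp

lemma unitriangular_vec_mat_solvable:
  fixes M :: "'v \<Rightarrow> 'v \<Rightarrow> 'a::comm_ring_1"
  assumes "finite S" "unitriangular S r M"
  shows "\<exists>y. (\<forall>a. a \<notin> S \<longrightarrow> y a = 0) \<and> (\<forall>b\<in>S. (\<Sum>a\<in>S. y a * M a b) = g b)"
  using assms
proof (induction S rule: finite_remove_induct)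
  case empty
  show ?case by (intro exI[of _ "\<lambda>_. 0"]) simp
next
  case (remove S)
  obtain m where m: "m \<in> S" "\<And>b. b \<in> S \<Longrightarrow> M m b = (if b = m then 1 else 0)"
    using unitriangular_ex_unit_row remove.hyps(1,2) remove.prems by blast
  obtain y where y: "\<forall>a. a \<notin> S - {m} \<longrightarrow> y a = 0"
    "\<forall>b\<in>S - {m}. (\<Sum>a\<in>S - {m}. y a * M a b) = g b"
    using remove.IH[OF m(1)] remove.prems unitriangular_subset[of S r M "S - {m}"] by auto
  define y' where "y' = y(m := g m - (\<Sum>a\<in>S - {m}. y a * M a m))"
  have "(\<Sum>a\<in>S - {m}. y' a * M a b) = (\<Sum>a\<in>S - {m}. y a * M a b)" for b
    by (simp add: y'_def)
  then have "(\<Sum>a\<in>S. y' a * M a b) = g b" if "b \<in> S" for b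
    using remove.hyps(1) m y(2) that by (auto simp: sum.remove y'_def)
  moreover have "y' a = 0" if "a \<notin> S" for a
    using y(1) m(1) that by (auto simp: y'_def)
  ultimately show ?case by blast
qed

lemma finite_verts: "finite (verts ps)"
proof -
  have "{Vij i j | i j. i < length ps \<and> 1 \<le> j \<and> j < ps ! i}
        \<subseteq> (\<lambda>(i, j). Vij i j) ` (SIGMA i:{..<length ps}. {..<ps ! i})"
    by auto
  moreover have "finite ((\<lambda>(i, j). Vij i j) ` (SIGMA i:{..<length ps}. {..<ps ! i}))"
    by blast
  ultimately show ?thesis
    unfolding verts_def by (simp add: finite_subset)
qed

lemma verts_simps [simp]:
  "V0 \<in> verts ps" "Vc \<in> verts ps"
  "Vij i j \<in> verts ps \<longleftrightarrow> i < length ps \<and> 1 \<le> j \<and> j < ps ! i"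
  by (auto simp: verts_def)

definition vert_rank :: "nat list \<Rightarrow> vert \<Rightarrow> nat" where
  "vert_rank ps v = (case v of V0 \<Rightarrow> 0 | Vij i j \<Rightarrow> j | Vc \<Rightarrow> Suc (sum_list ps))"

lemma homdim_unitriangular:
  "unitriangular (verts ps) (vert_rank ps) (\<lambda>a b. of_nat (homdim a b) :: 'a::comm_ring_1)"
  unfolding unitriangular_def
proof (intro conjI ballI impI)
  fix a show "of_nat (homdim a a) = (1::'a)" by (cases a) simp_all
next
  fix a b assume ab: "a \<in> verts ps" "b \<in> verts ps" "a \<noteq> b \<and> (of_nat (homdim a b) :: 'a) \<noteq> 0"
  then have "homdim a b \<noteq> 0" by (metis of_nat_0)
  with ab show "vert_rank ps a < vert_rank ps b"
    using elem_le_sum_list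
    by (cases a; cases b) (fastforce simp: vert_rank_def split: if_splits)+
qed

lemma K0_add:
  fixes x x' :: "vert \<Rightarrow> 'a::monoid_add"
  shows "x \<in> K0 ps \<Longrightarrow> x' \<in> K0 ps \<Longrightarrow> (\<lambda>v. x v + x' v) \<in> K0 ps"
  by (simp add: K0_def)

definition basis_vec :: "vert \<Rightarrow> vert \<Rightarrow> 'a::{zero,one}" where
  "basis_vec b = (\<lambda>v. if v = b then 1 else 0)"

lemma basis_vec_K0: "b \<in> verts ps \<Longrightarrow> basis_vec b \<in> K0 ps"
  by (simp add: basis_vec_def K0_def)

lemma euler_eq_sum_vec_mat:
  "euler ps y x = (\<Sum>b\<in>verts ps. x b * (\<Sum>a\<in>verts ps. y a * of_nat (homdim a b)))"
  unfolding euler_def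
  by (subst sum.swap) (simp add: sum_distrib_left mult.commute mult.left_commute)

lemma euler_basis_vec_right:
  "b \<in> verts ps \<Longrightarrow> euler ps y (basis_vec b) = (\<Sum>a\<in>verts ps. y a * of_nat (homdim a b))"
  unfolding euler_def basis_vec_def using finite_verts
  by (simp add: if_distrib cong: if_cong)

lemma euler_basis_vec_left:
  assumes "a \<in> verts ps"
  shows "euler ps (basis_vec a) z = (\<Sum>b\<in>verts ps. z b * of_nat (homdim a b))"
proof -
  have "(\<Sum>b\<in>verts ps. basis_vec a a' * of_nat (homdim a' b) * z b) =
      (if a' = a then (\<Sum>b\<in>verts ps. z b * of_nat (homdim a b)) else 0)" for a'
    by (simp add: basis_vec_def mult.commute)
  then show ?thesis
    unfolding euler_def using assms finite_verts by simp
qed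

lemma euler_add_right: "euler ps y (\<lambda>v. x v + x' v) = euler ps y x + euler ps y x'"
  unfolding euler_def by (simp add: distrib_left sum.distrib)

lemma euler_diff_left: "euler ps (\<lambda>v. y v - y' v) x = euler ps y x - euler ps y' x"
  unfolding euler_def by (simp add: left_diff_distrib sum_subtractf)

lemma euler_left_injective:
  fixes y y' :: "vert \<Rightarrow> 'a::comm_ring_1"
  assumes "y \<in> K0 ps" "y' \<in> K0 ps" "\<forall>x\<in>K0 ps. euler ps y x = euler ps y' x"
  shows "y = y'"
proof -
  have "\<forall>b\<in>verts ps. (\<Sum>a\<in>verts ps. (y a - y' a) * of_nat (homdim a b)) = 0"
    using assms(3) basis_vec_K0 euler_diff_left[of ps y y'] euler_basis_vec_right[of _ ps]
    by (metis diff_self)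
  then have "\<forall>a\<in>verts ps. y a - y' a = 0"
    by (rule unitriangular_left_kernel_zero[OF finite_verts homdim_unitriangular])
  then show ?thesis
    using assms(1,2) by (auto simp: K0_def fun_eq_iff)
qed

lemma euler_right_nondegenerate:
  fixes z :: "vert \<Rightarrow> 'a::comm_ring_1"
  assumes "z \<in> K0 ps" "\<forall>x\<in>K0 ps. euler ps x z = 0"
  shows "z = (\<lambda>_. 0)"
proof -
  have "\<forall>a\<in>verts ps. (\<Sum>b\<in>verts ps. z b * of_nat (homdim a b)) = 0"
    using assms(2) basis_vec_K0 euler_basis_vec_left by metis
  then have "\<forall>b\<in>verts ps. z b = 0"
    using unitriangular_left_kernel_zero[OF finite_verts
        unitriangular_transpose[OF finite_verts homdim_unitriangular]]
    by blast
  then show ?thesis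
    using assms(1) by (auto simp: K0_def)
qed

definition K0_additive :: "nat list \<Rightarrow> ((vert \<Rightarrow> 'a::monoid_add) \<Rightarrow> 'a) \<Rightarrow> bool" where
  "K0_additive ps f \<longleftrightarrow> (\<forall>x\<in>K0 ps. \<forall>x'\<in>K0 ps. f (\<lambda>v. x v + x' v) = f x + f x')"

lemma K0_additiveD:
  "K0_additive ps f \<Longrightarrow> x \<in> K0 ps \<Longrightarrow> x' \<in> K0 ps \<Longrightarrow> f (\<lambda>v. x v + x' v) = f x + f x'"
  unfolding K0_additive_def by blast

lemma K0_additive_zero:
  fixes f :: "(vert \<Rightarrow> 'a::comm_ring_1) \<Rightarrow> 'a"
  assumes "K0_additive ps f"
  shows "f (\<lambda>_. 0) = 0"
proof -
  have "(\<lambda>_. 0 :: 'a) \<in> K0 ps" by (simp add: K0_def)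
  then have "f (\<lambda>_. 0 + 0) = f (\<lambda>_. 0) + f (\<lambda>_. 0)"
    using K0_additiveD[OF assms] by blast
  then show ?thesis by simp
qed

lemma K0_additive_scale_of_int:
  fixes f :: "(vert \<Rightarrow> 'a::comm_ring_1) \<Rightarrow> 'a"
  assumes f: "K0_additive ps f" and x: "x \<in> K0 ps"
  shows "f (\<lambda>v. of_int n * x v) = of_int n * f x"
proof (induction n rule: int_induct[where k = 0])
  case base
  show ?case using K0_additive_zero[OF f] by simp
next
  case (step1 i)
  have "(\<lambda>v. of_int i * x v) \<in> K0 ps" using x by (simp add: K0_def)
  then have "f (\<lambda>v. of_int i * x v + x v) = f (\<lambda>v. of_int i * x v) + f x"
    using K0_additiveD[OF f _ x] by blast
  then show ?case using step1.IH by (simp add: distrib_right)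
next
  case (step2 i)
  have "(\<lambda>v. of_int (i - 1) * x v) \<in> K0 ps" using x by (simp add: K0_def)
  then have "f (\<lambda>v. of_int (i - 1) * x v + x v) = f (\<lambda>v. of_int (i - 1) * x v) + f x"
    using K0_additiveD[OF f _ x] by blast
  then show ?case using step2.IH by (simp add: algebra_simps)
qed

text \<open>The hypothesis on \<open>of_int\<close> (true for \<open>\<int>\<close> and \<open>\<int>\<^sub>2\<close>) makes additive forms linear.\<close>
lemma K0_additive_expand:
  fixes f :: "(vert \<Rightarrow> 'a::comm_ring_1) \<Rightarrow> 'a"
  assumes of_int_surj: "surj (of_int :: int \<Rightarrow> 'a)"
    and f: "K0_additive ps f" and x: "x \<in> K0 ps"
  shows "f x = (\<Sum>b\<in>verts ps. x b * f (basis_vec b))"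
proof -
  have restricted: "f (\<lambda>v. if v \<in> T then x v else 0) = (\<Sum>b\<in>T. x b * f (basis_vec b))"
    if "finite T" "T \<subseteq> verts ps" for T
    using that
  proof (induction T rule: finite_induct)
    case empty
    then show ?case using K0_additive_zero[OF f] by simp
  next
    case (insert c T)
    obtain n where n: "x c = of_int n" using of_int_surj by (metis surj_def)
    have split: "(\<lambda>v. if v \<in> insert c T then x v else 0) =
        (\<lambda>v. of_int n * basis_vec c v + (if v \<in> T then x v else 0))"
      using insert.hyps(2) n by (auto simp: basis_vec_def)
    have summands_K0: "(\<lambda>v. of_int n * basis_vec c v) \<in> K0 ps"
      "(\<lambda>v. if v \<in> T then x v else 0) \<in> K0 ps"
      using insert.prems by (auto simp: K0_def basis_vec_def)
    have "f (\<lambda>v. if v \<in> insert c T then x v else 0) =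
        f (\<lambda>v. of_int n * basis_vec c v) + f (\<lambda>v. if v \<in> T then x v else 0)"
      unfolding split by (rule K0_additiveD[OF f summands_K0])
    also have "f (\<lambda>v. of_int n * basis_vec c v) = of_int n * f (basis_vec c)"
      using K0_additive_scale_of_int[OF f basis_vec_K0] insert.prems by blast
    also have "f (\<lambda>v. if v \<in> T then x v else 0) = (\<Sum>b\<in>T. x b * f (basis_vec b))"
      using insert.IH insert.prems by blast
    finally show ?case
      using insert.hyps n by simp
  qed
  have "(\<lambda>v. if v \<in> verts ps then x v else 0) = x"
    using x by (auto simp: K0_def)
  then show ?thesis
    using restricted[OF finite_verts order_refl] by simp
qed

lemma K0_additive_eq_euler:
  fixes f :: "(vert \<Rightarrow> 'a::comm_ring_1) \<Rightarrow> 'a"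
  assumes "surj (of_int :: int \<Rightarrow> 'a)" "K0_additive ps f"
  obtains y where "y \<in> K0 ps" "\<And>x. x \<in> K0 ps \<Longrightarrow> f x = euler ps y x"
proof -
  obtain y where y: "\<forall>a. a \<notin> verts ps \<longrightarrow> y a = 0"
    "\<forall>b\<in>verts ps. (\<Sum>a\<in>verts ps. y a * of_nat (homdim a b)) = f (basis_vec b)"
    using unitriangular_vec_mat_solvable[OF finite_verts homdim_unitriangular,
        where g = "\<lambda>b. f (basis_vec b)"]
    by blast
  have "f x = euler ps y x" if "x \<in> K0 ps" for x
    unfolding K0_additive_expand[OF assms that] euler_eq_sum_vec_mat
    using y(2) by simp
  moreover have "y \<in> K0 ps" using y(1) by (simp add: K0_def)
  ultimately show ?thesis using that by blast
qed

lemma lforms_iff: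
  "f \<in> lforms ps F \<longleftrightarrow>
     f \<in> extensional (K0 ps) \<and> K0_additive ps f \<and> (\<forall>x\<in>K0 ps. f (\<lambda>v. x v + F x v) = 0)"
  unfolding lforms_def K0_additive_def by blast

lemma euler_zero_right [simp]: "euler ps y (\<lambda>_. 0) = 0"
  by (simp add: euler_def)

lemma euler_one_plus_Phi:
  fixes \<Phi> :: "(vert \<Rightarrow> 'a::comm_ring_1) \<Rightarrow> (vert \<Rightarrow> 'a)"
  assumes serre: "\<forall>x\<in>K0 ps. \<forall>y\<in>K0 ps. euler ps y (\<Phi> x) = - euler ps x y"
    and "x \<in> K0 ps" "y \<in> K0 ps"
  shows "euler ps y (\<lambda>v. x v + \<Phi> x v) = - euler ps x (\<lambda>v. \<Phi> y v + y v)"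
  using assms by (simp add: euler_add_right)

lemma euler_vanishes_on_one_plus_Phi_iff:
  fixes \<Phi> :: "(vert \<Rightarrow> 'a::comm_ring_1) \<Rightarrow> (vert \<Rightarrow> 'a)"
  assumes closed: "\<forall>x\<in>K0 ps. \<Phi> x \<in> K0 ps"
    and serre: "\<forall>x\<in>K0 ps. \<forall>y\<in>K0 ps. euler ps y (\<Phi> x) = - euler ps x y"
    and y: "y \<in> K0 ps"
  shows "(\<forall>x\<in>K0 ps. euler ps y (\<lambda>v. x v + \<Phi> x v) = 0) \<longleftrightarrow> (\<forall>v. - \<Phi> y v = y v)"
proof
  assume vanish: "\<forall>x\<in>K0 ps. euler ps y (\<lambda>v. x v + \<Phi> x v) = 0"
  have "euler ps x (\<lambda>v. \<Phi> y v + y v) = 0" if x: "x \<in> K0 ps" for x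
    using euler_one_plus_Phi[OF serre x y] vanish x by simp
  moreover have "(\<lambda>v. \<Phi> y v + y v) \<in> K0 ps"
    using closed y by (simp add: K0_add)
  ultimately have "(\<lambda>v. \<Phi> y v + y v) = (\<lambda>_. 0)"
    using euler_right_nondegenerate by blast
  then have "\<Phi> y v + y v = 0" for v
    by (rule fun_cong[where x = v, THEN trans]) simp
  then show "\<forall>v. - \<Phi> y v = y v"
    by (simp add: add_eq_0_iff)
next
  assume "\<forall>v. - \<Phi> y v = y v"
  then have "\<Phi> y v = - y v" for v
    by (simp add: minus_equation_iff)
  then have "(\<lambda>v. \<Phi> y v + y v) = (\<lambda>_. 0)"
    by simp
  then show "\<forall>x\<in>K0 ps. euler ps y (\<lambda>v. x v + \<Phi> x v) = 0"
    using euler_one_plus_Phi[OF serre _ y] by simp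
qed

lemma restrict_euler_bij_lforms:
  fixes \<Phi> :: "(vert \<Rightarrow> 'a::comm_ring_1) \<Rightarrow> (vert \<Rightarrow> 'a)"
  assumes of_int_surj: "surj (of_int :: int \<Rightarrow> 'a)"
    and closed: "\<forall>x\<in>K0 ps. \<Phi> x \<in> K0 ps"
    and serre: "\<forall>x\<in>K0 ps. \<forall>y\<in>K0 ps. euler ps y (\<Phi> x) = - euler ps x y"
  shows "bij_betw (\<lambda>y. restrict (\<lambda>x. euler ps y x) (K0 ps))
           {y \<in> K0 ps. \<forall>v. - \<Phi> y v = y v} (lforms ps \<Phi>)"
proof (rule bij_betwI')
  fix y y' assume "y \<in> {y \<in> K0 ps. \<forall>v. - \<Phi> y v = y v}" "y' \<in> {y \<in> K0 ps. \<forall>v. - \<Phi> y v = y v}"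
  then have "y \<in> K0 ps" "y' \<in> K0 ps" by simp_all
  show "(restrict (euler ps y) (K0 ps) = restrict (euler ps y') (K0 ps)) = (y = y')"
  proof
    assume "restrict (euler ps y) (K0 ps) = restrict (euler ps y') (K0 ps)"
    then have "\<forall>x\<in>K0 ps. euler ps y x = euler ps y' x"
      by (metis restrict_apply')
    then show "y = y'"
      by (rule euler_left_injective[OF \<open>y \<in> K0 ps\<close> \<open>y' \<in> K0 ps\<close>])
  qed simp
next
  fix y assume y: "y \<in> {y \<in> K0 ps. \<forall>v. - \<Phi> y v = y v}"
  have "K0_additive ps (restrict (euler ps y) (K0 ps))"
    by (simp add: K0_additive_def K0_add euler_add_right)
  then show "restrict (euler ps y) (K0 ps) \<in> lforms ps \<Phi>"
    using y euler_vanishes_on_one_plus_Phi_iff[OF closed serre, of y]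
    by (simp add: lforms_iff K0_add closed)
next
  fix f assume "f \<in> lforms ps \<Phi>"
  then have f: "f \<in> extensional (K0 ps)" "K0_additive ps f"
    "\<forall>x\<in>K0 ps. f (\<lambda>v. x v + \<Phi> x v) = 0"
    by (simp_all add: lforms_iff)
  obtain y where y: "y \<in> K0 ps" "\<And>x. x \<in> K0 ps \<Longrightarrow> f x = euler ps y x"
    using K0_additive_eq_euler[OF of_int_surj f(2)] by blast
  have "f = restrict (euler ps y) (K0 ps)"
    using f(1) y(2) by (auto simp: extensional_def)
  moreover have "\<forall>v. - \<Phi> y v = y v"
    using f(3) y euler_vanishes_on_one_plus_Phi_iff[OF closed serre y(1)] by (simp add: K0_add closed)
  ultimately show "\<exists>y\<in>{y \<in> K0 ps. \<forall>v. - \<Phi> y v = y v}. f = restrict (euler ps y) (K0 ps)"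
    using y(1) by blast
qed

lemma surj_of_int_bit: "surj (of_int :: int \<Rightarrow> bit)"
proof -
  have "c \<in> range (of_int :: int \<Rightarrow> bit)" for c :: bit
    by (cases c rule: bit.exhaust) (metis of_int_0 of_int_1 rangeI)+
  then show ?thesis by blast
qed

lemma red_K0: "x \<in> K0 ps \<Longrightarrow> red x \<in> K0 ps"
  by (simp add: K0_def red_def)

lemma K0_bit_eq_red:
  assumes "y \<in> K0 ps"
  obtains x where "x \<in> K0 ps" "y = red x"
proof
  show "(\<lambda>v. if y v = 1 then 1 else 0) \<in> K0 ps"
    using assms by (auto simp: K0_def)
  show "y = red (\<lambda>v. if y v = 1 then 1 else 0)"
    by (auto simp: red_def fun_eq_iff)
qed

lemma euler_red: "euler ps (red x) (red y) = of_int (euler ps x y)"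
  unfolding euler_def red_def by (simp add: of_int_sum)

lemma K0_closed_red_induced:
  assumes closed: "\<forall>x\<in>K0 ps. \<Phi> x \<in> K0 ps"
    and induced: "\<forall>x\<in>K0 ps. \<Phi>2 (red x) = red (\<Phi> x)"
  shows "\<forall>x\<in>K0 ps. \<Phi>2 x \<in> K0 ps"
  by (metis K0_bit_eq_red closed induced red_K0)

lemma serre_red_induced:
  assumes serre: "\<forall>x\<in>K0 ps. \<forall>y\<in>K0 ps. euler ps y (\<Phi> x) = - euler ps x y"
    and induced: "\<forall>x\<in>K0 ps. \<Phi>2 (red x) = red (\<Phi> x)"
  shows "\<forall>x\<in>K0 ps. \<forall>y\<in>K0 ps. euler ps y (\<Phi>2 x) = - euler ps x y"
proof (intro ballI)
  fix x' y' :: "vert \<Rightarrow> bit" assume "x' \<in> K0 ps" "y' \<in> K0 ps"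
  then obtain x y where x: "x \<in> K0 ps" "x' = red x" and y: "y \<in> K0 ps" "y' = red y"
    using K0_bit_eq_red by metis
  have "euler ps (red y) (\<Phi>2 (red x)) = of_int (euler ps y (\<Phi> x))"
    using induced x(1) by (simp add: euler_red)
  also have "\<dots> = - euler ps (red x) (red y)"
    using serre x(1) y(1) by (simp add: euler_red)
  finally show "euler ps y' (\<Phi>2 x') = - euler ps x' y'"
    using x(2) y(2) by simp
qed

theorem proposition3p9:
  fixes ps :: "nat list"
    and \<Phi> :: "(vert \<Rightarrow> int) \<Rightarrow> (vert \<Rightarrow> int)"
    and \<Phi>2 :: "(vert \<Rightarrow> bit) \<Rightarrow> (vert \<Rightarrow> bit)"
  assumes weights: "\<forall>i<length ps. 2 \<le> ps ! i"
    and Phi_closed: "\<forall>x\<in>K0 ps. \<Phi> x \<in> K0 ps"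
    and Phi_serre: "\<forall>x\<in>K0 ps. \<forall>y\<in>K0 ps. euler ps y (\<Phi> x) = - euler ps x y"
    and Phi2_induced: "\<forall>x\<in>K0 ps. \<Phi>2 (red x) = red (\<Phi> x)"
  shows "((\<exists>i<length ps. even (ps ! i)) \<longrightarrow>
            bij_betw (\<lambda>y. restrict (\<lambda>x. euler ps y x) (K0 ps))
              {y \<in> K0 ps. (\<forall>v. - \<Phi> y v = y v)} (lforms ps \<Phi>))
       \<and> ((\<forall>i<length ps. odd (ps ! i)) \<longrightarrow>
            bij_betw (\<lambda>y. restrict (\<lambda>x. euler ps y x) (K0 ps))
              {y \<in> K0 ps. (\<forall>v. - \<Phi>2 y v = y v)} (lforms ps \<Phi>2))"
proof -
  have "surj (of_int :: int \<Rightarrow> int)" by simp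
  from restrict_euler_bij_lforms[OF this Phi_closed Phi_serre]
  have integral: "bij_betw (\<lambda>y. restrict (\<lambda>x. euler ps y x) (K0 ps))
      {y \<in> K0 ps. \<forall>v. - \<Phi> y v = y v} (lforms ps \<Phi>)" .
  have mod2: "bij_betw (\<lambda>y. restrict (\<lambda>x. euler ps y x) (K0 ps))
      {y \<in> K0 ps. \<forall>v. - \<Phi>2 y v = y v} (lforms ps \<Phi>2)"
    using restrict_euler_bij_lforms[OF surj_of_int_bit
        K0_closed_red_induced[OF Phi_closed Phi2_induced]
        serre_red_induced[OF Phi_serre Phi2_induced]] .
  show ?thesis using integral mod2 by blast
qed

end
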